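(* In the setting below, the associator obtained by twisting the trivial associator of $H$ by $\mathbb J$, namely $\Phi:=(1\otimes\mathbb J)(\mathrm{id}\otimes\Delta)(\mathbb J)(\Delta\otimes\mathrm{id})(\mathbb J^{-1})(\mathbb J^{-1}\otimes1)$, is given by $$\Phi=\sum_{\beta,\gamma,\delta\in\mathbb{Z}_n^m}\Bigl(\prod_{i,j=1}^m q^{a_{ij}\beta_i((\gamma_j+\delta_j)'-\gamma_j-\delta_j)}\Bigr)\mathbf 1_\beta\otimes\mathbf 1_\gamma\otimes\mathbf 1_\delta,$$ where $\{\mathbf 1_\beta\mid\beta\in\mathbb{Z}_n^m\}$ are the primitive idempotents of the group algebra $\mathbb{C}[g_1^n,\dots,g_m^n]\cong\mathbb{C}[\mathbb{Z}_n^m]$ with $\mathbf 1_\beta g_i^n=q^{n\beta_i}\mathbf 1_\beta$, the components of $\beta,\gamma,\delta$ are regarded as integers in $\{0,\dots,n-1\}$, and $(\gamma_j+\delta_j)'$ is the remainder of $\gamma_j+\delta_j$ modulo $n$. In particular $\Phi\in A\otimes A\otimes A$.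
   Context: Setting: $n\ge2$, $q$ a primitive root of unity of order $n^2$, $m\ge1$; $H$ a finite dimensional Hopf algebra over $\mathbb{C}$ generated by grouplike $g_1,\dots,g_m$ and $e_1,\dots,e_m$ with $g_i^{n^2}=1$, $g_ig_j=g_jg_i$, $g_ie_jg_i^{-1}=q^{\delta_{ij}}e_j$, $\Delta(e_i)=e_i\otimes K_i+1\otimes e_i$, $K_i=\prod_jg_j^{a_{ij}}$, $a_{ij}\in\mathbb{Z}_{n^2}$; $H$ projects onto $\mathbb{C}[(\mathbb{Z}_{n^2})^m]$ via $g_i\mapsto g_i$, $e_i\mapsto0$. $A\subset H$ is the subalgebra generated by the $g_i^n$ and $e_i$. $\{1_\beta\mid\beta\in(\mathbb{Z}_{n^2})^m\}$ are the primitive idempotents of $\mathbb{C}[g_1,\dots,g_m]$ with $1_\beta g_i=q^{\beta_i}1_\beta$. For $z,y\in\mathbb{Z}_{n^2}$ represented in $\{0,\dots,n^2-1\}$, $c(z,y)=q^{-z(y-y')}$ with $y'$ the remainder of $y$ mod $n$, and $\mathbb J=\sum_{\beta,\gamma\in(\mathbb{Z}_{n^2})^m}\prod_{i,j}c(\beta_i,\gamma_j)^{a_{ij}}1_\beta\otimes1_\gamma$. *)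

theory Defs
  imports Complex_Main
begin

text \<open>
G = (Z_N)^m with N = n^2 is represented by integer vectors
x :: nat \<Rightarrow> int with 0 \<le> x i < N for i < m and x i = 0 for i \<ge> m.
The group algebra C[G] is represented by coefficient functions
G \<Rightarrow> complex in the basis of group elements (zero outside G);
C[G]^{\<otimes>2} = C[G\<times>G] and C[G]^{\<otimes>3} = C[G\<times>G\<times>G] likewise, with
convolution as multiplication.  The generator g_i is the unit vector e_i.
\<close>

definition Gset :: "int \<Rightarrow> nat \<Rightarrow> (nat \<Rightarrow> int) set" where
  "Gset N m = {x. (\<forall>i<m. 0 \<le> x i \<and> x i < N) \<and> (\<forall>i. m \<le> i \<longrightarrow> x i = 0)}"

definition vsub :: "int \<Rightarrow> (nat \<Rightarrow> int) \<Rightarrow> (nat \<Rightarrow> int) \<Rightarrow> (nat \<Rightarrow> int)" where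
  "vsub N x y = (\<lambda>i. (x i - y i) mod N)"

definition zerov :: "nat \<Rightarrow> int" where
  "zerov = (\<lambda>i. 0)"

definition gelem :: "'g \<Rightarrow> 'g \<Rightarrow> complex" where
  "gelem g = (\<lambda>y. if y = g then 1 else 0)"

definition conv :: "'g set \<Rightarrow> ('g \<Rightarrow> 'g \<Rightarrow> 'g) \<Rightarrow> ('g \<Rightarrow> complex) \<Rightarrow> ('g \<Rightarrow> complex) \<Rightarrow> 'g \<Rightarrow> complex" where
  "conv C sub f g x = (if x \<in> C then (\<Sum>y\<in>C. f y * g (sub x y)) else 0)"

definition mult2 :: "int \<Rightarrow> nat \<Rightarrow> ((nat \<Rightarrow> int) \<times> (nat \<Rightarrow> int) \<Rightarrow> complex)
     \<Rightarrow> ((nat \<Rightarrow> int) \<times> (nat \<Rightarrow> int) \<Rightarrow> complex) \<Rightarrow> ((nat \<Rightarrow> int) \<times> (nat \<Rightarrow> int) \<Rightarrow> complex)" where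
  "mult2 N m = conv (Gset N m \<times> Gset N m)
      (\<lambda>(x1, x2) (y1, y2). (vsub N x1 y1, vsub N x2 y2))"

definition mult3 :: "int \<Rightarrow> nat \<Rightarrow> ((nat \<Rightarrow> int) \<times> (nat \<Rightarrow> int) \<times> (nat \<Rightarrow> int) \<Rightarrow> complex)
     \<Rightarrow> ((nat \<Rightarrow> int) \<times> (nat \<Rightarrow> int) \<times> (nat \<Rightarrow> int) \<Rightarrow> complex)
     \<Rightarrow> ((nat \<Rightarrow> int) \<times> (nat \<Rightarrow> int) \<times> (nat \<Rightarrow> int) \<Rightarrow> complex)" where
  "mult3 N m = conv (Gset N m \<times> Gset N m \<times> Gset N m)
      (\<lambda>(x1, x2, x3) (y1, y2, y3). (vsub N x1 y1, vsub N x2 y2, vsub N x3 y3))"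

definition inv2 :: "int \<Rightarrow> nat \<Rightarrow> ((nat \<Rightarrow> int) \<times> (nat \<Rightarrow> int) \<Rightarrow> complex)
     \<Rightarrow> ((nat \<Rightarrow> int) \<times> (nat \<Rightarrow> int) \<Rightarrow> complex)" where
  "inv2 N m J = (THE K. (\<forall>x. x \<notin> Gset N m \<times> Gset N m \<longrightarrow> K x = 0)
                    \<and> mult2 N m J K = gelem (zerov, zerov)
                    \<and> mult2 N m K J = gelem (zerov, zerov))"

definition one_tensor :: "((nat \<Rightarrow> int) \<times> (nat \<Rightarrow> int) \<Rightarrow> complex)
     \<Rightarrow> ((nat \<Rightarrow> int) \<times> (nat \<Rightarrow> int) \<times> (nat \<Rightarrow> int) \<Rightarrow> complex)" where
  "one_tensor X = (\<lambda>(x, y, z). gelem zerov x * X (y, z))"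

definition tensor_one :: "((nat \<Rightarrow> int) \<times> (nat \<Rightarrow> int) \<Rightarrow> complex)
     \<Rightarrow> ((nat \<Rightarrow> int) \<times> (nat \<Rightarrow> int) \<times> (nat \<Rightarrow> int) \<Rightarrow> complex)" where
  "tensor_one X = (\<lambda>(x, y, z). X (x, y) * gelem zerov z)"

text \<open>(id \<otimes> \<Delta>) and (\<Delta> \<otimes> id), the linear extensions of
  g \<otimes> h \<mapsto> g \<otimes> h \<otimes> h and g \<otimes> h \<mapsto> g \<otimes> g \<otimes> h (group elements are grouplike)\<close>
definition id_Delta :: "((nat \<Rightarrow> int) \<times> (nat \<Rightarrow> int) \<Rightarrow> complex)
     \<Rightarrow> ((nat \<Rightarrow> int) \<times> (nat \<Rightarrow> int) \<times> (nat \<Rightarrow> int) \<Rightarrow> complex)" where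
  "id_Delta X = (\<lambda>(x, y, z). if y = z then X (x, y) else 0)"

definition Delta_id :: "((nat \<Rightarrow> int) \<times> (nat \<Rightarrow> int) \<Rightarrow> complex)
     \<Rightarrow> ((nat \<Rightarrow> int) \<times> (nat \<Rightarrow> int) \<times> (nat \<Rightarrow> int) \<Rightarrow> complex)" where
  "Delta_id X = (\<lambda>(x, y, z). if x = y then X (x, z) else 0)"

definition dotp :: "nat \<Rightarrow> (nat \<Rightarrow> int) \<Rightarrow> (nat \<Rightarrow> int) \<Rightarrow> int" where
  "dotp m b g = (\<Sum>i<m. b i * g i)"

text \<open>primitive idempotents 1_\<beta> of C[g_1,...,g_m] = C[(Z_{n^2})^m], \<beta> \<in> (Z_{n^2})^m:
  1_\<beta> = n^{-2m} \<Sum>_g q^{-\<beta>\<cdot>g} g, so that 1_\<beta> g_i = q^{\<beta>_i} 1_\<beta>\<close>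
definition bigidem :: "complex \<Rightarrow> nat \<Rightarrow> nat \<Rightarrow> (nat \<Rightarrow> int) \<Rightarrow> (nat \<Rightarrow> int) \<Rightarrow> complex" where
  "bigidem q n m b = (\<lambda>x. \<Sum>g\<in>Gset (int n ^ 2) m.
       (q powi (- dotp m b g)) / (of_nat n ^ (2 * m)) * gelem g x)"

text \<open>primitive idempotents \<one>_\<beta> of C[g_1^n,...,g_m^n] = C[(Z_n)^m], \<beta> \<in> (Z_n)^m:
  \<one>_\<beta> = n^{-m} \<Sum>_h q^{-n \<beta>\<cdot>h} (g^n)^h, so that \<one>_\<beta> g_i^n = q^{n \<beta>_i} \<one>_\<beta>\<close>
definition smallidem :: "complex \<Rightarrow> nat \<Rightarrow> nat \<Rightarrow> (nat \<Rightarrow> int) \<Rightarrow> (nat \<Rightarrow> int) \<Rightarrow> complex" where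
  "smallidem q n m b = (\<lambda>x. \<Sum>h\<in>Gset (int n) m.
       (q powi (- (int n * dotp m b h))) / (of_nat n ^ m) * gelem (\<lambda>i. int n * h i) x)"

definition cfun :: "complex \<Rightarrow> nat \<Rightarrow> int \<Rightarrow> int \<Rightarrow> complex" where
  "cfun q n z y = q powi (- z * (y - y mod int n))"

definition Jtw :: "complex \<Rightarrow> nat \<Rightarrow> nat \<Rightarrow> (nat \<Rightarrow> nat \<Rightarrow> int)
     \<Rightarrow> ((nat \<Rightarrow> int) \<times> (nat \<Rightarrow> int) \<Rightarrow> complex)" where
  "Jtw q n m a = (\<lambda>(x, y). \<Sum>b\<in>Gset (int n ^ 2) m. \<Sum>c\<in>Gset (int n ^ 2) m.
       (\<Prod>i<m. \<Prod>j<m. cfun q n (b i) (c j) powi a i j) * bigidem q n m b x * bigidem q n m c y)"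

definition Phi :: "complex \<Rightarrow> nat \<Rightarrow> nat \<Rightarrow> (nat \<Rightarrow> nat \<Rightarrow> int)
     \<Rightarrow> ((nat \<Rightarrow> int) \<times> (nat \<Rightarrow> int) \<times> (nat \<Rightarrow> int) \<Rightarrow> complex)" where
  "Phi q n m a = (let N = int n ^ 2; J = Jtw q n m a; Ji = inv2 N m J in
      mult3 N m (mult3 N m (mult3 N m (one_tensor J) (id_Delta J)) (Delta_id Ji)) (tensor_one Ji))"

end

theory Submission
  imports Defs
begin

text \<open>
The group algebra of G = (Z_{n^2})^m is diagonalised by its characters: every element X equals
the sum over b of X^(b) 1_b, where X^(b) = sum_y X(y) q^{b.y} is the eigenvalue of multiplication
by X on the primitive idempotent 1_b, and convolution becomes pointwise multiplication of these
coefficients.  Tensor powers are handled the same way, using the characters of G^2 and G^3.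
Since group elements are grouplike, Delta(1_g) = sum over g1 + g2 = g of 1_g1 (x) 1_g2, so the
coefficient of Phi at 1_b (x) 1_c (x) 1_d is J(c,d) J(b,c+d) / (J(b+c,d) J(b,c)), where J(b,c) is the
coefficient of the twist.  Writing c(z,y) = q^{-n z (y div n)}, this coboundary collapses to
q^{a_ij (b_i mod n) ((c_j + d_j)' - c_j' - d_j')} (with ' denoting reduction mod n), which only
depends on b, c, d modulo n.  Finally, grouping the 1_b by b mod n gives the idempotents of
C[g_1^n, ..., g_m^n]: the small idempotent for b0 is the sum of the 1_b with b = b0 (mod n).
\<close>

section \<open>Fourier analysis on a finite abelian group\<close>

definition fourier_coeff :: "'p set \<Rightarrow> ('p \<Rightarrow> 'p \<Rightarrow> complex) \<Rightarrow> ('p \<Rightarrow> complex) \<Rightarrow> 'p \<Rightarrow> complex"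
  where "fourier_coeff P chi X b = (\<Sum>y\<in>P. X y * chi b y)"

definition char_idem :: "'p set \<Rightarrow> ('p \<Rightarrow> 'p \<Rightarrow> complex) \<Rightarrow> 'p \<Rightarrow> 'p \<Rightarrow> complex"
  where "char_idem P chi b x = (if x \<in> P then 1 / (of_nat (card P) * chi b x) else 0)"

definition fourier_expand :: "'p set \<Rightarrow> ('p \<Rightarrow> 'p \<Rightarrow> complex) \<Rightarrow> ('p \<Rightarrow> complex) \<Rightarrow> 'p \<Rightarrow> complex"
  where "fourier_expand P chi h x = (\<Sum>b\<in>P. h b * char_idem P chi b x)"

text \<open>
The constant char_idem P chi b is the primitive idempotent of the
group algebra belonging to the character chi b, and fourier_coeff P chi X b is the scalar by
which X acts on it.
\<close>

locale finite_fourier =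
  fixes P :: "'p set" and sub :: "'p \<Rightarrow> 'p \<Rightarrow> 'p" and z :: 'p and chi :: "'p \<Rightarrow> 'p \<Rightarrow> complex"
  assumes finite: "finite P"
    and zero_in: "z \<in> P"
    and sub_in: "x \<in> P \<Longrightarrow> y \<in> P \<Longrightarrow> sub x y \<in> P"
    and sub_eq_zero_iff: "x \<in> P \<Longrightarrow> y \<in> P \<Longrightarrow> sub x y = z \<longleftrightarrow> x = y"
    and chi_nonzero: "b \<in> P \<Longrightarrow> x \<in> P \<Longrightarrow> chi b x \<noteq> 0"
    and chi_sub: "b \<in> P \<Longrightarrow> x \<in> P \<Longrightarrow> y \<in> P \<Longrightarrow> chi b (sub x y) * chi b y = chi b x"
    and orthogonal: "b \<in> P \<Longrightarrow> b' \<in> P \<Longrightarrow>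
      (\<Sum>y\<in>P. chi b y / chi b' y) = (if b = b' then of_nat (card P) else 0)"
    and dual_orthogonal: "x \<in> P \<Longrightarrow>
      (\<Sum>b\<in>P. 1 / chi b x) = (if x = z then of_nat (card P) else 0)"
begin

abbreviation coeff where "coeff \<equiv> fourier_coeff P chi"
abbreviation idem where "idem \<equiv> char_idem P chi"
abbreviation expand where "expand \<equiv> fourier_expand P chi"
abbreviation supported :: "('p \<Rightarrow> complex) \<Rightarrow> bool" where "supported X \<equiv> \<forall>x. x \<notin> P \<longrightarrow> X x = 0"

lemma card_nonzero: "(of_nat (card P) :: complex) \<noteq> 0"
  using finite zero_in by (auto simp: card_eq_0_iff)

lemma expand_supported: "supported (expand h)"
  by (simp add: fourier_expand_def char_idem_def)

lemma conv_supported: "supported (conv P sub X Y)"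
  by (simp add: conv_def)

lemma expand_cong: "(\<And>b. b \<in> P \<Longrightarrow> h b = h' b) \<Longrightarrow> expand h = expand h'"
  unfolding fourier_expand_def by (intro ext sum.cong) auto

lemma coeff_expand:
  assumes b: "b \<in> P"
  shows "coeff (expand h) b = h b"
proof -
  have "coeff (expand h) b = (\<Sum>y\<in>P. \<Sum>b'\<in>P. h b' / of_nat (card P) * (chi b y / chi b' y))"
    unfolding fourier_coeff_def fourier_expand_def char_idem_def
    by (intro sum.cong) (auto simp: sum_distrib_right)
  also have "\<dots> = (\<Sum>b'\<in>P. h b' / of_nat (card P) * (\<Sum>y\<in>P. chi b y / chi b' y))"
    by (subst sum.swap) (simp add: sum_distrib_left)
  also have "\<dots> = (\<Sum>b'\<in>P. if b' = b then h b else 0)"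
    using b card_nonzero by (intro sum.cong) (auto simp: orthogonal)
  finally show ?thesis using b finite by simp
qed

lemma chi_sub': "b \<in> P \<Longrightarrow> x \<in> P \<Longrightarrow> y \<in> P \<Longrightarrow> chi b (sub x y) = chi b x / chi b y"
  using chi_sub chi_nonzero by (simp add: eq_divide_eq)

lemma conv_expand: "conv P sub X (expand h) = expand (\<lambda>b. coeff X b * h b)"
proof
  fix x
  show "conv P sub X (expand h) x = expand (\<lambda>b. coeff X b * h b) x"
  proof (cases "x \<in> P")
    case x: True
    have "conv P sub X (expand h) x = (\<Sum>y\<in>P. X y * expand h (sub x y))"
      using x by (simp add: conv_def)
    also have "\<dots> = (\<Sum>y\<in>P. \<Sum>b\<in>P. X y * chi b y * (h b * idem b x))"
      unfolding fourier_expand_def char_idem_def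
      using x by (auto simp: sum_distrib_left sub_in chi_sub' chi_nonzero mult_ac intro!: sum.cong)
    also have "\<dots> = expand (\<lambda>b. coeff X b * h b) x"
      unfolding fourier_expand_def fourier_coeff_def
      by (subst sum.swap) (simp add: sum_distrib_left sum_distrib_right mult_ac)
    finally show ?thesis .
  qed (simp add: conv_def expand_supported)
qed

lemma expand_one: "expand (\<lambda>_. 1) = gelem z"
proof
  fix x
  have "expand (\<lambda>_. 1) x = (if x \<in> P then (\<Sum>b\<in>P. 1 / chi b x) / of_nat (card P) else 0)"
    by (simp add: fourier_expand_def char_idem_def sum_divide_distrib mult.commute)
  then show "expand (\<lambda>_. 1) x = gelem z x"
    using dual_orthogonal[of x] card_nonzero zero_in by (cases "x \<in> P") (auto simp: gelem_def)
qed

lemma conv_unit: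
  assumes X: "supported X"
  shows "conv P sub X (gelem z) = X"
proof
  fix x
  show "conv P sub X (gelem z) x = X x"
  proof (cases "x \<in> P")
    case x: True
    then have "conv P sub X (gelem z) x = (\<Sum>y\<in>P. X y * gelem z (sub x y))"
      by (simp add: conv_def)
    also have "\<dots> = (\<Sum>y\<in>P. if y = x then X y else 0)"
      using x by (intro sum.cong) (auto simp: gelem_def sub_eq_zero_iff)
    finally show ?thesis using x finite by simp
  qed (simp add: conv_def X)
qed

lemma expand_coeff:
  assumes "supported X"
  shows "expand (coeff X) = X"
proof -
  have "expand (\<lambda>b. coeff X b * 1) = conv P sub X (expand (\<lambda>_. 1))"
    by (rule conv_expand[symmetric])
  also have "\<dots> = X"
    by (simp add: expand_one conv_unit[OF assms])
  finally show ?thesis by simp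
qed

lemma coeff_conv:
  assumes "supported Y" "b \<in> P"
  shows "coeff (conv P sub X Y) b = coeff X b * coeff Y b"
proof -
  have "conv P sub X Y = expand (\<lambda>b. coeff X b * coeff Y b)"
    using conv_expand[of X "coeff Y"] by (simp only: expand_coeff[OF assms(1)])
  then show ?thesis
    using assms(2) by (simp add: coeff_expand)
qed

lemma coeff_unit: "b \<in> P \<Longrightarrow> coeff (gelem z) b = 1"
  using coeff_expand[of b "\<lambda>_. 1"] by (simp add: expand_one)

lemma the_conv_inverse:
  assumes X: "supported X" and nz: "\<And>b. b \<in> P \<Longrightarrow> coeff X b \<noteq> 0"
  shows "(THE Y. supported Y \<and> conv P sub X Y = gelem z \<and> conv P sub Y X = gelem z)
    = expand (\<lambda>b. 1 / coeff X b)"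
proof (rule the_equality)
  let ?Y = "expand (\<lambda>b. 1 / coeff X b)"
  have "conv P sub X ?Y = expand (\<lambda>b. coeff X b * (1 / coeff X b))"
    by (rule conv_expand)
  also have "\<dots> = expand (\<lambda>_. 1)"
    using nz by (intro expand_cong) simp
  finally have XY: "conv P sub X ?Y = gelem z"
    by (simp only: expand_one)
  have "conv P sub ?Y X = conv P sub ?Y (expand (coeff X))"
    by (simp only: expand_coeff[OF X])
  also have "\<dots> = expand (\<lambda>b. coeff ?Y b * coeff X b)"
    by (rule conv_expand)
  also have "\<dots> = expand (\<lambda>_. 1)"
    using nz by (intro expand_cong) (simp add: coeff_expand)
  finally have YX: "conv P sub ?Y X = gelem z"
    by (simp only: expand_one)
  show "supported ?Y \<and> conv P sub X ?Y = gelem z \<and> conv P sub ?Y X = gelem z"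
    using XY YX expand_supported by blast
next
  fix Y
  assume Y: "supported Y \<and> conv P sub X Y = gelem z \<and> conv P sub Y X = gelem z"
  have "coeff Y b = 1 / coeff X b" if "b \<in> P" for b
    using coeff_conv[OF X that, of Y] coeff_unit[OF that] Y nz[OF that] by (simp add: field_simps)
  then have "expand (coeff Y) = expand (\<lambda>b. 1 / coeff X b)"
    by (rule expand_cong)
  then show "Y = expand (\<lambda>b. 1 / coeff X b)"
    using expand_coeff Y by metis
qed

end

lemma finite_fourier_prod:
  assumes "finite_fourier P1 sub1 z1 chi1" "finite_fourier P2 sub2 z2 chi2"
  shows "finite_fourier (P1 \<times> P2) (\<lambda>(x1, x2) (y1, y2). (sub1 x1 y1, sub2 x2 y2)) (z1, z2)
    (\<lambda>(b1, b2) (x1, x2). chi1 b1 x1 * chi2 b2 x2)"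
proof -
  interpret F1: finite_fourier P1 sub1 z1 chi1 by fact
  interpret F2: finite_fourier P2 sub2 z2 chi2 by fact
  show ?thesis
  proof (unfold_locales, unfold split_paired_all case_prod_conv)
    show "(\<Sum>y\<in>P1 \<times> P2. (case y of (y1, y2) \<Rightarrow> chi1 b1 y1 * chi2 b2 y2)
        / (case y of (y1, y2) \<Rightarrow> chi1 b1' y1 * chi2 b2' y2))
      = (if (b1, b2) = (b1', b2') then of_nat (card (P1 \<times> P2)) else 0)"
      if "(b1, b2) \<in> P1 \<times> P2" "(b1', b2') \<in> P1 \<times> P2" for b1 b2 b1' b2'
    proof -
      have "(\<Sum>y\<in>P1 \<times> P2. (case y of (y1, y2) \<Rightarrow> chi1 b1 y1 * chi2 b2 y2)
          / (case y of (y1, y2) \<Rightarrow> chi1 b1' y1 * chi2 b2' y2))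
        = (\<Sum>y1\<in>P1. chi1 b1 y1 / chi1 b1' y1) * (\<Sum>y2\<in>P2. chi2 b2 y2 / chi2 b2' y2)"
        by (simp add: sum.cartesian_product' sum_product)
      then show ?thesis
        using that by (simp add: F1.orthogonal F2.orthogonal card_cartesian_product)
    qed
    show "(\<Sum>b\<in>P1 \<times> P2. 1 / (case b of (b1, b2) \<Rightarrow> \<lambda>(y1, y2). chi1 b1 y1 * chi2 b2 y2) (x1, x2))
      = (if (x1, x2) = (z1, z2) then of_nat (card (P1 \<times> P2)) else 0)"
      if "(x1, x2) \<in> P1 \<times> P2" for x1 x2
    proof -
      have "(\<Sum>b\<in>P1 \<times> P2. 1 / (case b of (b1, b2) \<Rightarrow> \<lambda>(y1, y2). chi1 b1 y1 * chi2 b2 y2) (x1, x2))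
        = (\<Sum>b1\<in>P1. 1 / chi1 b1 x1) * (\<Sum>b2\<in>P2. 1 / chi2 b2 x2)"
        by (simp add: sum.cartesian_product' sum_product)
      then show ?thesis
        using that by (simp add: F1.dual_orthogonal F2.dual_orthogonal card_cartesian_product)
    qed
  qed (auto simp: F1.finite F2.finite F1.zero_in F2.zero_in F1.sub_in F2.sub_in F1.sub_eq_zero_iff
      F2.sub_eq_zero_iff F1.chi_nonzero F2.chi_nonzero F1.chi_sub' F2.chi_sub')
qed

lemma char_idem_prod:
  "char_idem (P1 \<times> P2) (\<lambda>(b1, b2) (x1, x2). chi1 b1 x1 * chi2 b2 x2) (b1, b2) (x1, x2)
    = char_idem P1 chi1 b1 x1 * char_idem P2 chi2 b2 x2"
  by (simp add: char_idem_def card_cartesian_product)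

section \<open>Character sums over the box (Z_K)^m\<close>

lemma power_int_cong:
  fixes w :: complex
  assumes "w ^ M = 1" "int M dvd e - e'"
  shows "w powi e = w powi e'"
proof (cases "M = 0")
  case False
  then have "w \<noteq> 0" using assms(1) by (auto simp: power_0_left)
  obtain k where "e = e' + int M * k" using assms(2) by (metis add_diff_cancel_left' dvd_def diff_add_cancel)
  then show ?thesis using \<open>w \<noteq> 0\<close> assms(1) by (simp add: power_int_add power_int_mult)
qed (use assms in simp)

lemma power_int_eq_1_iff:
  fixes w :: complex
  assumes "M > 0" "w ^ M = 1" and prim: "\<forall>k. 0 < k \<and> k < M \<longrightarrow> w ^ k \<noteq> 1"
  shows "w powi t = 1 \<longleftrightarrow> int M dvd t"
proof -
  have "w powi t = w ^ nat (t mod int M)"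
    using power_int_cong[OF assms(2), of t "t mod int M"] assms(1)
    by (simp add: mod_eq_dvd_iff[symmetric] power_int_of_nat[symmetric] del: power_int_of_nat)
  moreover have "0 \<le> t mod int M" "nat (t mod int M) < M"
    using assms(1) by (simp_all add: nat_less_iff)
  ultimately have "w powi t = 1 \<longleftrightarrow> nat (t mod int M) = 0"
    using prim by (metis gr0I power_0)
  also have "\<dots> \<longleftrightarrow> int M dvd t"
    using \<open>0 \<le> t mod int M\<close> by (auto simp: dvd_eq_mod_eq_0)
  finally show ?thesis .
qed

lemma sum_power_int_root_of_unity:
  fixes w :: complex
  assumes "M > 0" "w ^ M = 1" "\<forall>k. 0 < k \<and> k < M \<longrightarrow> w ^ k \<noteq> 1"
  shows "(\<Sum>v\<in>{0..<int M}. w powi (t * v)) = (if int M dvd t then of_nat M else 0)"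
proof -
  have "w \<noteq> 0" using assms(1,2) by (auto simp: power_0_left)
  have "(\<Sum>v\<in>{0..<int M}. w powi (t * v)) = (\<Sum>k<M. w powi (t * int k))"
    by (simp add: atLeast0LessThan[symmetric] image_int_atLeastLessThan[symmetric, of 0, simplified]
        sum.reindex)
  also have "\<dots> = (\<Sum>k<M. (w powi t) ^ k)"
    by (simp add: power_int_mult)
  moreover have "(w powi t) ^ M = (w ^ M) powi t"
    by (simp add: power_int_power' power_int_power mult.commute)
  ultimately show ?thesis
    using power_int_eq_1_iff[OF assms, of t] assms(2) by (auto simp: sum_gp_strict)
qed

lemma power_int_sum:
  fixes w :: complex
  assumes "w \<noteq> 0"
  shows "w powi (\<Sum>i\<in>A. f i) = (\<Prod>i\<in>A. w powi f i)"
  by (induction A rule: infinite_finite_induct) (simp_all add: assms power_int_add)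

lemma Gset_0: "Gset K 0 = {\<lambda>_. 0}"
  unfolding Gset_def by auto

lemma Gset_Suc: "Gset K (Suc m) = (\<lambda>(y, v). y(m := v)) ` (Gset K m \<times> {0..<K})"
proof (intro set_eqI iffI)
  fix x assume x: "x \<in> Gset K (Suc m)"
  have "x = (\<lambda>(y, v). y(m := v)) (x(m := 0), x m)" by auto
  moreover have "(x(m := 0), x m) \<in> Gset K m \<times> {0..<K}"
    using x unfolding Gset_def by auto
  ultimately show "x \<in> (\<lambda>(y, v). y(m := v)) ` (Gset K m \<times> {0..<K})" by blast
qed (auto simp: Gset_def less_Suc_eq)

lemma inj_on_Gset_Suc: "inj_on (\<lambda>(y, v). y(m := v)) (Gset K m \<times> {0..<K})"
proof (rule inj_onI, clarsimp)
  fix y v y' v'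
  assume y: "y \<in> Gset K m" "y' \<in> Gset K m" and eq: "y(m := v) = y'(m := v')"
  have "y i = y' i" for i
    using fun_cong[OF eq, of i] y unfolding Gset_def by (cases "i = m") auto
  then show "y = y' \<and> v = v'" using fun_cong[OF eq, of m] by auto
qed

lemma finite_Gset: "finite (Gset K m)"
  by (induction m) (auto simp: Gset_Suc Gset_0)

lemma card_Gset: "card (Gset K m) = nat K ^ m"
  by (induction m) (simp_all add: Gset_0 Gset_Suc card_image[OF inj_on_Gset_Suc] card_cartesian_product)

lemma sum_Gset_prod:
  "(\<Sum>y\<in>Gset K m. \<Prod>i<m. g i (y i)) = (\<Prod>i<m. \<Sum>v\<in>{0..<K}. (g i v :: complex))"
proof (induction m)
  case (Suc m)
  have "(\<Sum>y\<in>Gset K (Suc m). \<Prod>i<Suc m. g i (y i))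
      = (\<Sum>y\<in>Gset K m. \<Sum>v\<in>{0..<K}. (\<Prod>i<m. g i (y i)) * g m v)"
    unfolding Gset_Suc by (simp add: sum.reindex[OF inj_on_Gset_Suc] sum.cartesian_product'
        prod.lessThan_Suc)
  also have "\<dots> = (\<Prod>i<Suc m. \<Sum>v\<in>{0..<K}. g i v)"
    using Suc by (simp add: sum_product[symmetric])
  finally show ?case .
qed (simp add: Gset_0)

lemma Gset_eq_iff_dvd:
  assumes "x \<in> Gset K m" "y \<in> Gset K m"
  shows "(\<forall>i<m. K dvd x i - y i) \<longleftrightarrow> x = y"
proof
  assume dvd: "\<forall>i<m. K dvd x i - y i"
  show "x = y"
  proof
    fix i
    show "x i = y i"
      using assms dvd[rule_format, of i] unfolding Gset_def
      by (cases "i < m") (auto simp: mod_eq_dvd_iff[symmetric])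
  qed
qed simp

lemma sum_Gset_power_int:
  fixes w :: complex
  assumes "M > 0" "w ^ M = 1" "\<forall>k. 0 < k \<and> k < M \<longrightarrow> w ^ k \<noteq> 1"
  shows "(\<Sum>y\<in>Gset (int M) m. w powi (\<Sum>i<m. t i * y i))
    = (if \<forall>i<m. int M dvd t i then of_nat M ^ m else 0)"
proof -
  have "w \<noteq> 0" using assms(1,2) by (auto simp: power_0_left)
  then have "(\<Sum>y\<in>Gset (int M) m. w powi (\<Sum>i<m. t i * y i))
      = (\<Prod>i<m. if int M dvd t i then of_nat M else 0)"
    by (simp add: power_int_sum sum_Gset_prod[of "\<lambda>i v. w powi (t i * v)"]
        sum_power_int_root_of_unity[OF assms])
  also have "\<dots> = (if \<forall>i<m. int M dvd t i then of_nat M ^ m else 0)"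
    by (induction m) (auto simp: less_Suc_eq)
  finally show ?thesis .
qed

lemma zerov_in_Gset: "0 < K \<Longrightarrow> zerov \<in> Gset K m"
  by (simp add: Gset_def zerov_def)

lemma finite_fourier_Gset:
  fixes w :: complex
  assumes M: "M > 0" and root: "w ^ M = 1" and prim: "\<forall>k. 0 < k \<and> k < M \<longrightarrow> w ^ k \<noteq> 1"
  shows "finite_fourier (Gset (int M) m) (vsub (int M)) zerov (\<lambda>b x. w powi dotp m b x)"
proof
  let ?G = "Gset (int M) m"
  have w: "w \<noteq> 0" using M root by (auto simp: power_0_left)
  have card: "of_nat (card ?G) = (of_nat M ^ m :: complex)"
    by (simp add: card_Gset)
  show "finite ?G" by (rule finite_Gset)
  show "zerov \<in> ?G" using M by (simp add: zerov_in_Gset)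
  show "vsub (int M) x y \<in> ?G" if "x \<in> ?G" "y \<in> ?G" for x y
    using M that by (simp add: Gset_def vsub_def)
  show "vsub (int M) x y = zerov \<longleftrightarrow> x = y" if "x \<in> ?G" "y \<in> ?G" for x y
    using Gset_eq_iff_dvd[OF that] by (auto simp: vsub_def zerov_def fun_eq_iff dvd_eq_mod_eq_0)
  show "w powi dotp m b x \<noteq> 0" for b x
    using w by simp
  show "w powi dotp m b (vsub (int M) x y) * w powi dotp m b y = w powi dotp m b x" for b x y
  proof -
    have "dotp m b (vsub (int M) x y) + dotp m b y - dotp m b x
        = (\<Sum>i<m. b i * ((x i - y i) mod int M - (x i - y i)))"
      by (simp add: dotp_def vsub_def sum_subtractf sum.distrib algebra_simps)
    also have "int M dvd \<dots>"
      by (intro dvd_sum dvd_mult) (simp add: mod_eq_dvd_iff[symmetric])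
    finally have "int M dvd dotp m b (vsub (int M) x y) + dotp m b y - dotp m b x" .
    then show ?thesis
      using power_int_cong[OF root] w by (simp add: power_int_add[symmetric])
  qed
  show "(\<Sum>y\<in>?G. w powi dotp m b y / w powi dotp m b' y) = (if b = b' then of_nat (card ?G) else 0)"
    if "b \<in> ?G" "b' \<in> ?G" for b b'
  proof -
    have "w powi dotp m b y / w powi dotp m b' y = w powi (\<Sum>i<m. (b i - b' i) * y i)" for y
      using w by (simp add: dotp_def power_int_diff[symmetric] sum_subtractf left_diff_distrib)
    then show ?thesis
      using sum_Gset_power_int[OF assms] Gset_eq_iff_dvd[OF that] card by simp
  qed
  show "(\<Sum>b\<in>?G. 1 / w powi dotp m b x) = (if x = zerov then of_nat (card ?G) else 0)"
    if "x \<in> ?G" for x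
  proof -
    have "(\<Sum>b\<in>?G. 1 / w powi dotp m b x) = (\<Sum>b\<in>?G. w powi (\<Sum>i<m. (- x i) * b i))"
      by (simp add: dotp_def power_int_minus[symmetric] sum_negf mult.commute divide_inverse)
    also have "\<dots> = (if \<forall>i<m. int M dvd - x i then of_nat M ^ m else 0)"
      by (rule sum_Gset_power_int[OF assms])
    finally show ?thesis
      using Gset_eq_iff_dvd[OF that zerov_in_Gset] M card by (simp add: zerov_def)
  qed
qed

section \<open>The twist and its associator\<close>

lemma gelem_sum_eval: "finite A \<Longrightarrow> (\<Sum>g\<in>A. c g * gelem g x) = (if x \<in> A then c x else 0)"
  unfolding gelem_def by (simp add: if_distrib sum.delta' cong: if_cong)

lemma sum_gelem_mult:
  assumes "finite A"
  shows "(\<Sum>x\<in>A. gelem g x * F x) = (if g \<in> A then F g else 0)"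
proof -
  have "(\<Sum>x\<in>A. gelem g x * F x) = (\<Sum>x\<in>A. if x = g then F x else 0)"
    by (intro sum.cong) (auto simp: gelem_def)
  then show ?thesis using assms by simp
qed

lemma twist_cocycle_exponent_dvd:
  fixes n b c c' d :: int
  shows "n\<^sup>2 dvd - c' * (d - d mod n) - b * ((c + d) mod n\<^sup>2 - (c + d) mod n\<^sup>2 mod n)
      + (b + c') mod n\<^sup>2 * (d - d mod n) + b * (c - c mod n)
      - b mod n * ((c mod n + d mod n) mod n - c mod n - d mod n)"
proof -
  define u where "u = (c mod n + d mod n) div n"
  have "n dvd n\<^sup>2" by (simp add: power2_eq_square)
  then have "(c + d) mod n\<^sup>2 mod n = (c + d) mod n"
    by (rule mod_mod_cancel)
  also have "\<dots> = c + d - n * (c div n + d div n + u)"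
    by (simp add: minus_div_mult_eq_mod[symmetric] div_add1_eq[of c d n] u_def mult.commute)
  finally have cd_n: "(c + d) mod n\<^sup>2 mod n = c + d - n * (c div n + d div n + u)" .
  have carry: "(c mod n + d mod n) mod n = c mod n + d mod n - n * u"
    and cd_N: "(c + d) mod n\<^sup>2 = c + d - n\<^sup>2 * ((c + d) div n\<^sup>2)"
    and bc_N: "(b + c') mod n\<^sup>2 = b + c' - n\<^sup>2 * ((b + c') div n\<^sup>2)"
    and b_n: "b mod n = b - n * (b div n)"
    and c_n: "c mod n = c - n * (c div n)"
    and d_n: "d mod n = d - n * (d div n)"
    by (simp_all add: minus_div_mult_eq_mod[symmetric] u_def mult.commute)
  have "- c' * (d - d mod n) - b * ((c + d) mod n\<^sup>2 - (c + d) mod n\<^sup>2 mod n)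
      + (b + c') mod n\<^sup>2 * (d - d mod n) + b * (c - c mod n)
      - b mod n * ((c mod n + d mod n) mod n - c mod n - d mod n)
    = n\<^sup>2 * (b * ((c + d) div n\<^sup>2) - n * ((b + c') div n\<^sup>2) * (d div n) - (b div n) * u)"
    unfolding cd_n carry unfolding cd_N bc_N unfolding b_n c_n d_n
    by (simp add: algebra_simps power2_eq_square)
  then show ?thesis by simp
qed

definition vadd :: "int \<Rightarrow> (nat \<Rightarrow> int) \<Rightarrow> (nat \<Rightarrow> int) \<Rightarrow> nat \<Rightarrow> int"
  where "vadd N x y = (\<lambda>i. (x i + y i) mod N)"

lemma vadd_in_Gset: "0 < K \<Longrightarrow> x \<in> Gset K m \<Longrightarrow> y \<in> Gset K m \<Longrightarrow> vadd K x y \<in> Gset K m"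
  by (simp add: Gset_def vadd_def)

locale twist_setting =
  fixes q :: complex and n m :: nat and a :: "nat \<Rightarrow> nat \<Rightarrow> int"
  assumes n_pos: "0 < n"
    and root: "q ^ n\<^sup>2 = 1"
    and primitive: "\<forall>k. 0 < k \<and> k < n\<^sup>2 \<longrightarrow> q ^ k \<noteq> 1"
begin

abbreviation N :: int where "N \<equiv> int n ^ 2"
abbreviation G where "G \<equiv> Gset N m"
abbreviation chi :: "(nat \<Rightarrow> int) \<Rightarrow> (nat \<Rightarrow> int) \<Rightarrow> complex" where "chi b x \<equiv> q powi dotp m b x"

end

sublocale twist_setting \<subseteq> G: finite_fourier G "vsub N" zerov chi
  using finite_fourier_Gset[of "n\<^sup>2" q m] n_pos root primitive by simp

sublocale twist_setting \<subseteq> G2: finite_fourier "G \<times> G" "\<lambda>(x1, x2) (y1, y2). (vsub N x1 y1, vsub N x2 y2)"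
  "(zerov, zerov)" "\<lambda>(b1, b2) (x1, x2). chi b1 x1 * chi b2 x2"
  by (rule finite_fourier_prod[OF G.finite_fourier_axioms G.finite_fourier_axioms])

sublocale twist_setting \<subseteq> G3: finite_fourier "G \<times> G \<times> G"
  "\<lambda>(x1, x2, x3) (y1, y2, y3). (vsub N x1 y1, vsub N x2 y2, vsub N x3 y3)"
  "(zerov, zerov, zerov)" "\<lambda>(b1, b2, b3) (x1, x2, x3). chi b1 x1 * chi b2 x2 * chi b3 x3"
proof -
  have "(\<lambda>(x1, x2, x3) (y1, y2, y3). (vsub N x1 y1, vsub N x2 y2, vsub N x3 y3))
    = (\<lambda>(x1, x23) (y1, y23). (vsub N x1 y1, (\<lambda>(x2, x3) (y2, y3). (vsub N x2 y2, vsub N x3 y3)) x23 y23))"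
    "(\<lambda>(b1, b2, b3) (x1, x2, x3). chi b1 x1 * chi b2 x2 * chi b3 x3)
    = (\<lambda>(b1, b23) (x1, x23). chi b1 x1 * (\<lambda>(b2, b3) (x2, x3). chi b2 x2 * chi b3 x3) b23 x23)"
    by (auto simp: fun_eq_iff)
  then show "finite_fourier (G \<times> G \<times> G)
    (\<lambda>(x1, x2, x3) (y1, y2, y3). (vsub N x1 y1, vsub N x2 y2, vsub N x3 y3))
    (zerov, zerov, zerov) (\<lambda>(b1, b2, b3) (x1, x2, x3). chi b1 x1 * chi b2 x2 * chi b3 x3)"
    using finite_fourier_prod[OF G.finite_fourier_axioms G2.finite_fourier_axioms] by simp
qed

context twist_setting
begin

definition twist_coeff :: "(nat \<Rightarrow> int) \<times> (nat \<Rightarrow> int) \<Rightarrow> complex"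
  where "twist_coeff = (\<lambda>(b, c). \<Prod>i<m. \<Prod>j<m. cfun q n (b i) (c j) powi a i j)"

lemma q_nonzero: "q \<noteq> 0"
  using root n_pos by (auto simp: power_0_left)

lemma twist_coeff_nonzero: "twist_coeff p \<noteq> 0"
  using q_nonzero by (simp add: twist_coeff_def cfun_def split: prod.split)

lemma bigidem_eq_idem: "bigidem q n m b x = G.idem b x"
proof -
  have "(of_nat (card G) :: complex) = of_nat n ^ (2 * m)"
    by (simp add: card_Gset nat_power_eq power_mult)
  then show ?thesis
    unfolding bigidem_def char_idem_def
    by (simp add: gelem_sum_eval finite_Gset power_int_minus divide_inverse)
qed

lemma G2_expand_apply:
  "G2.expand h (x, y) = (\<Sum>b\<in>G. \<Sum>c\<in>G. h (b, c) * bigidem q n m b x * bigidem q n m c y)"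
  by (simp add: fourier_expand_def sum.cartesian_product' char_idem_prod bigidem_eq_idem mult_ac)

lemma G3_expand_apply:
  "G3.expand h (x, y, z) = (\<Sum>b\<in>G. \<Sum>c\<in>G. \<Sum>d\<in>G.
    h (b, c, d) * bigidem q n m b x * bigidem q n m c y * bigidem q n m d z)"
proof -
  have "G3.idem (b, c, d) (x, y, z) = G.idem b x * G.idem c y * G.idem d z" for b c d
    by (simp add: char_idem_def card_cartesian_product)
  then show ?thesis
    by (simp add: fourier_expand_def sum.cartesian_product' bigidem_eq_idem mult.assoc)
qed

lemma Jtw_eq_expand: "Jtw q n m a = G2.expand twist_coeff"
  by (simp add: Jtw_def G2_expand_apply twist_coeff_def fun_eq_iff)

lemma inv2_Jtw_eq_expand: "inv2 N m (Jtw q n m a) = G2.expand (\<lambda>p. 1 / twist_coeff p)"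
proof -
  have "inv2 N m (Jtw q n m a) = G2.expand (\<lambda>p. 1 / G2.coeff (G2.expand twist_coeff) p)"
    unfolding inv2_def mult2_def Jtw_eq_expand
    by (rule G2.the_conv_inverse) (simp_all add: G2.expand_supported G2.coeff_expand twist_coeff_nonzero)
  also have "\<dots> = G2.expand (\<lambda>p. 1 / twist_coeff p)"
    by (rule G2.expand_cong) (simp add: G2.coeff_expand)
  finally show ?thesis .
qed

lemma G2_coeff_apply: "G2.coeff Y (b, c) = (\<Sum>x\<in>G. \<Sum>y\<in>G. Y (x, y) * chi b x * chi c y)"
  by (simp add: fourier_coeff_def sum.cartesian_product' mult_ac)

lemma G3_coeff_apply:
  "G3.coeff Y (b, c, d) = (\<Sum>x\<in>G. \<Sum>y\<in>G. \<Sum>z\<in>G. Y (x, y, z) * chi b x * chi c y * chi d z)"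
  by (simp add: fourier_coeff_def sum.cartesian_product' mult_ac)

lemma chi_zerov: "chi b zerov = 1"
  by (simp add: dotp_def zerov_def)

lemma q_powi_cong: "N dvd e - e' \<Longrightarrow> q powi e = q powi e'"
  using power_int_cong[OF root] by simp

lemma chi_vadd: "chi c y * chi d y = chi (vadd N c d) y"
proof -
  have "dotp m (vadd N c d) y - (dotp m c y + dotp m d y) = (\<Sum>i<m. ((c i + d i) mod N - (c i + d i)) * y i)"
    by (simp add: dotp_def vadd_def sum_subtractf sum.distrib algebra_simps)
  also have "N dvd \<dots>"
    by (intro dvd_sum dvd_mult2) (simp add: mod_eq_dvd_iff[symmetric])
  finally show ?thesis
    using q_powi_cong q_nonzero by (simp add: power_int_add[symmetric])
qed

lemma coeff_one_tensor: "G3.coeff (one_tensor Y) (b, c, d) = G2.coeff Y (c, d)"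
  unfolding G3_coeff_apply G2_coeff_apply one_tensor_def
  by (simp add: sum_distrib_left[symmetric] mult.assoc sum_gelem_mult finite_Gset G.zero_in chi_zerov)

lemma coeff_tensor_one: "G3.coeff (tensor_one Y) (b, c, d) = G2.coeff Y (b, c)"
  unfolding G3_coeff_apply G2_coeff_apply tensor_one_def
  by (simp add: sum_gelem_mult finite_Gset G.zero_in chi_zerov mult.commute mult.left_commute)

lemma coeff_id_Delta: "G3.coeff (id_Delta Y) (b, c, d) = G2.coeff Y (b, vadd N c d)"
proof -
  have "G3.coeff (id_Delta Y) (b, c, d)
      = (\<Sum>x\<in>G. \<Sum>y\<in>G. \<Sum>z\<in>G. if z = y then Y (x, y) * chi b x * (chi c y * chi d z) else 0)"
    unfolding G3_coeff_apply id_Delta_def by (intro sum.cong) auto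
  also have "\<dots> = G2.coeff Y (b, vadd N c d)"
    by (simp add: G2_coeff_apply finite_Gset chi_vadd)
  finally show ?thesis .
qed

lemma coeff_Delta_id: "G3.coeff (Delta_id Y) (b, c, d) = G2.coeff Y (vadd N b c, d)"
proof -
  have "G3.coeff (Delta_id Y) (b, c, d)
      = (\<Sum>x\<in>G. \<Sum>y\<in>G. if y = x then \<Sum>z\<in>G. Y (x, z) * (chi b x * chi c x) * chi d z else 0)"
    unfolding G3_coeff_apply Delta_id_def by (auto simp: mult.assoc intro!: sum.cong)
  also have "\<dots> = G2.coeff Y (vadd N b c, d)"
    by (simp add: G2_coeff_apply finite_Gset chi_vadd)
  finally show ?thesis .
qed

definition vmod :: "(nat \<Rightarrow> int) \<Rightarrow> nat \<Rightarrow> int"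
  where "vmod b = (\<lambda>i. b i mod int n)"

definition assoc_coeff :: "(nat \<Rightarrow> int) \<Rightarrow> (nat \<Rightarrow> int) \<Rightarrow> (nat \<Rightarrow> int) \<Rightarrow> complex"
  where "assoc_coeff b c d = (\<Prod>i<m. \<Prod>j<m. q powi (a i j * b i * ((c j + d j) mod int n - c j - d j)))"

text \<open>Below, b and c' stand for i-th entries and c, d for j-th entries of vectors b, c, d; the
  vector c enters through both indices.\<close>

lemma cfun_cocycle:
  "cfun q n c' d * cfun q n b ((c + d) mod N) / (cfun q n ((b + c') mod N) d * cfun q n b c)
    = q powi (b mod n * ((c mod n + d mod n) mod n - c mod n - d mod n))"
  unfolding cfun_def
  using q_powi_cong[OF twist_cocycle_exponent_dvd[of n c' d b c]] q_nonzero
  by (simp add: power_int_add[symmetric] power_int_diff[symmetric] algebra_simps)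

lemma twist_coeff_cocycle:
  "twist_coeff (c, d) * twist_coeff (b, vadd N c d) / (twist_coeff (vadd N b c, d) * twist_coeff (b, c))
    = assoc_coeff (vmod b) (vmod c) (vmod d)"
proof -
  have "twist_coeff (c, d) * twist_coeff (b, vadd N c d) / (twist_coeff (vadd N b c, d) * twist_coeff (b, c))
    = (\<Prod>i<m. \<Prod>j<m. (cfun q n (c i) (d j) * cfun q n (b i) ((c j + d j) mod N)
        / (cfun q n ((b i + c i) mod N) (d j) * cfun q n (b i) (c j))) powi a i j)"
    by (simp add: twist_coeff_def vadd_def power_int_mult_distrib power_int_divide_distrib
        prod.distrib prod_dividef)
  also have "\<dots> = (\<Prod>i<m. \<Prod>j<m. (q powi (b i mod n * ((c j mod n + d j mod n) mod n
      - c j mod n - d j mod n))) powi a i j)"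
    by (simp only: cfun_cocycle)
  also have "\<dots> = assoc_coeff (vmod b) (vmod c) (vmod d)"
    by (simp add: assoc_coeff_def vmod_def mult_ac flip: power_int_mult)
  finally show ?thesis .
qed

lemma supported_id_Delta: "G2.supported Y \<Longrightarrow> G3.supported (id_Delta Y)"
  by (auto simp: id_Delta_def)

lemma supported_Delta_id: "G2.supported Y \<Longrightarrow> G3.supported (Delta_id Y)"
  by (auto simp: Delta_id_def)

lemma supported_tensor_one: "G2.supported Y \<Longrightarrow> G3.supported (tensor_one Y)"
  using G.zero_in by (auto simp: tensor_one_def gelem_def)

lemma coeff_Phi:
  assumes "p \<in> G \<times> G \<times> G"
  shows "G3.coeff (Phi q n m a) p = (case p of (b, c, d) \<Rightarrow> assoc_coeff (vmod b) (vmod c) (vmod d))"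
proof -
  obtain b c d where p: "p = (b, c, d)" and G: "b \<in> G" "c \<in> G" "d \<in> G"
    using assms by auto
  let ?J = "G2.expand twist_coeff" and ?J' = "G2.expand (\<lambda>p. 1 / twist_coeff p)"
  have "G3.coeff (Phi q n m a) p = G3.coeff (one_tensor ?J) p * G3.coeff (id_Delta ?J) p
      * G3.coeff (Delta_id ?J') p * G3.coeff (tensor_one ?J') p"
    unfolding Phi_def Let_def inv2_Jtw_eq_expand unfolding Jtw_eq_expand mult3_def using assms
    by (simp add: G3.coeff_conv supported_id_Delta supported_Delta_id supported_tensor_one
        G2.expand_supported)
  also have "\<dots> = twist_coeff (c, d) * twist_coeff (b, vadd N c d)
      * (1 / twist_coeff (vadd N b c, d)) * (1 / twist_coeff (b, c))"
    using G n_pos by (simp add: p coeff_one_tensor coeff_id_Delta coeff_Delta_id coeff_tensor_one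
        G2.coeff_expand vadd_in_Gset)
  also have "\<dots> = assoc_coeff (vmod b) (vmod c) (vmod d)"
    by (simp flip: twist_coeff_cocycle)
  finally show ?thesis by (simp add: p)
qed

lemma Phi_eq_expand: "Phi q n m a = G3.expand (\<lambda>(b, c, d). assoc_coeff (vmod b) (vmod c) (vmod d))"
proof -
  have "G3.supported (Phi q n m a)"
    by (simp add: Phi_def Let_def mult3_def G3.conv_supported)
  then have "Phi q n m a = G3.expand (G3.coeff (Phi q n m a))"
    by (simp add: G3.expand_coeff)
  also have "\<dots> = G3.expand (\<lambda>(b, c, d). assoc_coeff (vmod b) (vmod c) (vmod d))"
    by (rule G3.expand_cong) (simp add: coeff_Phi)
  finally show ?thesis .
qed

abbreviation H where "H \<equiv> Gset (int n) m"

lemma vmod_in_Gset: "b \<in> G \<Longrightarrow> vmod b \<in> H"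
  using n_pos by (simp add: Gset_def vmod_def)

lemma times_n_in_Gset: "h \<in> H \<Longrightarrow> (\<lambda>i. int n * h i) \<in> G"
proof -
  assume h: "h \<in> H"
  have "int n * h i < int n * int n" if "i < m" for i
    using h that n_pos by (simp add: Gset_def)
  then show ?thesis using h by (simp add: Gset_def power2_eq_square)
qed

lemma smallidem_supported: "G.supported (smallidem q n m b0)"
proof (intro allI impI)
  fix x
  assume "x \<notin> G"
  then have "gelem (\<lambda>i. int n * h i) x = 0" if "h \<in> H" for h
    using times_n_in_Gset[OF that] by (auto simp: gelem_def)
  then show "smallidem q n m b0 x = 0"
    by (simp add: smallidem_def)
qed

lemma coeff_smallidem:
  assumes b0: "b0 \<in> H" and b: "b \<in> G"
  shows "G.coeff (smallidem q n m b0) b = (if vmod b = b0 then 1 else 0)"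
proof -
  have qn: "(q ^ n) ^ n = 1" "\<forall>k. 0 < k \<and> k < n \<longrightarrow> (q ^ n) ^ k \<noteq> 1"
    using root primitive n_pos by (auto simp: power_mult[symmetric] power2_eq_square)
  have inner: "(\<Sum>y\<in>G. gelem (\<lambda>i. int n * h i) y * chi b y) = chi b (\<lambda>i. int n * h i)"
    if "h \<in> H" for h
    using times_n_in_Gset[OF that] by (simp add: sum_gelem_mult finite_Gset)
  have "G.coeff (smallidem q n m b0) b
      = (\<Sum>h\<in>H. q powi (- (int n * dotp m b0 h)) / of_nat n ^ m * chi b (\<lambda>i. int n * h i))"
    unfolding fourier_coeff_def smallidem_def sum_distrib_right
    by (subst sum.swap) (simp add: mult.assoc inner flip: sum_distrib_left sum_divide_distrib)
  also have "\<dots> = (\<Sum>h\<in>H. (q ^ n) powi (\<Sum>i<m. (b i - b0 i) * h i)) / of_nat n ^ m"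
    by (simp add: sum_divide_distrib dotp_def power_int_power sum_distrib_left sum_subtractf
        algebra_simps power_int_diff q_nonzero flip: power_int_add)
  also have "\<dots> = (if \<forall>i<m. int n dvd b i - b0 i then 1 else 0)"
    using n_pos by (simp add: sum_Gset_power_int[OF _ qn])
  also have "(\<forall>i<m. int n dvd b i - b0 i) \<longleftrightarrow> vmod b = b0"
    using Gset_eq_iff_dvd[OF vmod_in_Gset[OF b] b0] by (simp add: vmod_def dvd_eq_mod_eq_0 mod_diff_left_eq)
  finally show ?thesis .
qed

lemma smallidem_eq_sum_bigidem:
  assumes "b0 \<in> H"
  shows "smallidem q n m b0 x = (\<Sum>b | b \<in> G \<and> vmod b = b0. bigidem q n m b x)"
proof -
  have "smallidem q n m b0 x = G.expand (G.coeff (smallidem q n m b0)) x"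
    using smallidem_supported by (simp add: G.expand_coeff)
  also have "\<dots> = G.expand (\<lambda>b. if vmod b = b0 then 1 else 0) x"
    using assms by (intro fun_cong[OF G.expand_cong]) (simp add: coeff_smallidem)
  also have "\<dots> = (\<Sum>b\<in>G. if vmod b = b0 then bigidem q n m b x else 0)"
    by (auto simp: fourier_expand_def bigidem_eq_idem intro!: sum.cong)
  finally show ?thesis
    by (simp add: sum.inter_filter finite_Gset)
qed

lemma sum_vmod_bigidem:
  "(\<Sum>b\<in>G. \<phi> (vmod b) * bigidem q n m b x) = (\<Sum>b0\<in>H. \<phi> b0 * smallidem q n m b0 x)"
proof -
  have "(\<Sum>b\<in>G. \<phi> (vmod b) * bigidem q n m b x)
      = (\<Sum>b0\<in>H. \<Sum>b | b \<in> G \<and> vmod b = b0. \<phi> (vmod b) * bigidem q n m b x)"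
    by (rule sum.group[symmetric]) (auto simp: finite_Gset vmod_in_Gset)
  also have "\<dots> = (\<Sum>b0\<in>H. \<phi> b0 * smallidem q n m b0 x)"
    by (intro sum.cong refl) (simp add: smallidem_eq_sum_bigidem sum_distrib_left)
  finally show ?thesis .
qed

lemma Phi_eq_sum_smallidem:
  "Phi q n m a (x, y, z) = (\<Sum>b\<in>H. \<Sum>c\<in>H. \<Sum>d\<in>H.
    assoc_coeff b c d * smallidem q n m b x * smallidem q n m c y * smallidem q n m d z)"
proof -
  let ?B = "bigidem q n m" and ?S = "smallidem q n m"
  have "Phi q n m a (x, y, z)
      = (\<Sum>b\<in>G. (\<Sum>c\<in>G. (\<Sum>d\<in>G. assoc_coeff (vmod b) (vmod c) (vmod d) * ?B d z) * ?B c y) * ?B b x)"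
    unfolding Phi_eq_expand G3_expand_apply by (simp add: sum_distrib_left sum_distrib_right mult_ac)
  also have "\<dots> = (\<Sum>b\<in>G. (\<Sum>c\<in>G. (\<Sum>d\<in>H. assoc_coeff (vmod b) (vmod c) d * ?S d z) * ?B c y) * ?B b x)"
    by (simp only: sum_vmod_bigidem[where \<phi> = "assoc_coeff (vmod _) (vmod _)"])
  also have "\<dots> = (\<Sum>b\<in>G. (\<Sum>c\<in>H. (\<Sum>d\<in>H. assoc_coeff (vmod b) c d * ?S d z) * ?S c y) * ?B b x)"
    by (simp only: sum_vmod_bigidem[where \<phi> = "\<lambda>c. \<Sum>d\<in>H. assoc_coeff (vmod _) c d * ?S d z"])
  also have "\<dots> = (\<Sum>b\<in>H. (\<Sum>c\<in>H. (\<Sum>d\<in>H. assoc_coeff b c d * ?S d z) * ?S c y) * ?S b x)"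
    by (simp only: sum_vmod_bigidem[where \<phi> = "\<lambda>b. \<Sum>c\<in>H. (\<Sum>d\<in>H. assoc_coeff b c d * ?S d z) * ?S c y"])
  also have "\<dots> = (\<Sum>b\<in>H. \<Sum>c\<in>H. \<Sum>d\<in>H. assoc_coeff b c d * ?S b x * ?S c y * ?S d z)"
    by (simp add: sum_distrib_left sum_distrib_right mult_ac)
  finally show ?thesis .
qed

lemma smallidem_eq_0: "\<not> int n dvd x i \<Longrightarrow> smallidem q n m b x = 0"
  by (auto simp: smallidem_def gelem_def intro!: sum.neutral)

lemma Phi_eq_0_if_not_dvd:
  "\<not> (int n dvd x i \<and> int n dvd y i \<and> int n dvd z i) \<Longrightarrow> Phi q n m a (x, y, z) = 0"
  by (auto simp: Phi_eq_sum_smallidem smallidem_eq_0)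

end

theorem lemma4p2:
  fixes q :: complex and n m :: nat and a :: "nat \<Rightarrow> nat \<Rightarrow> int"
  assumes "n \<ge> 2" and "m \<ge> 1"
    and "q ^ (n^2) = 1" and "\<forall>k. 0 < k \<and> k < n^2 \<longrightarrow> q ^ k \<noteq> 1"
  shows "Phi q n m a =
      (\<lambda>(x, y, z). \<Sum>b\<in>Gset (int n) m. \<Sum>c\<in>Gset (int n) m. \<Sum>d\<in>Gset (int n) m.
         (\<Prod>i<m. \<Prod>j<m. q powi (a i j * b i * ((c j + d j) mod int n - c j - d j)))
         * smallidem q n m b x * smallidem q n m c y * smallidem q n m d z)
    \<and> (\<forall>x y z. Phi q n m a (x, y, z) \<noteq> 0 \<longrightarrow>
         (\<forall>i. int n dvd x i \<and> int n dvd y i \<and> int n dvd z i))"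
proof -
  interpret twist_setting q n m a
    using assms by unfold_locales auto
  show ?thesis
    using Phi_eq_0_if_not_dvd by (auto simp: fun_eq_iff Phi_eq_sum_smallidem assoc_coeff_def)
qed

end
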